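(* Let $c>1$ be an integer, let $m=m_1m_2\cdots m_c\in S_c$, and let $K$ be the set partition of $S_c$ whose only part with more than one element is the set of cyclic shifts of $m$, namely $\{m_am_{a+1}\cdots m_cm_1\cdots m_{a-1} : 1\le a\le c\}$ (all other parts are singletons). Let $n>c$. Define $p\in S_n$ by $$p=1\,(m_1+1)\,(m_2+1)\cdots(m_c+1)\,(c+2)\,(c+3)\cdots n,$$ and let $q\in S_n$ be the permutation obtained from $p$ by swapping the positions of the letters $1$ and $2$. Then every non-avoider in $S_n$ is $K$-equivalent to $p$ or to $q$.
   Context: Permutations are written in one-line notation as words. The order permutation (standardization) of a word $u$ of distinct positive integers of length $\ell$ is the unique $\pi\in S_\ell$ with $\pi_i<\pi_j$ iff $u_i<u_j$. The $K$-equivalence on $S_n$ is the equivalence relation generated by declaring $\phi\equiv\psi$ whenever $\phi=aub$ and $\psi=avb$ for words $a,b,u,v$ with $u,v$ of length $c$ whose order permutations lie in the same part of $K$. A hit in a permutation is a contiguous subword of length $c$ whose order permutation is a cyclic shift of $m$; a non-avoider is a permutation containing at least one hit. *)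

theory Defs
  imports Main
begin

definition perms :: "nat \<Rightarrow> nat list set" where
  "perms n = {w. distinct w \<and> set w = {1..n}}"

definition std :: "nat list \<Rightarrow> nat list" where
  "std u = map (\<lambda>x. card {y \<in> set u. y \<le> x}) u"

definition cyc_shifts :: "nat list \<Rightarrow> nat list set" where
  "cyc_shifts m = {rotate a m | a. a < length m}"

definition K_same_part :: "nat list \<Rightarrow> nat list \<Rightarrow> nat list \<Rightarrow> bool" where
  "K_same_part m s t \<longleftrightarrow> s = t \<or> (s \<in> cyc_shifts m \<and> t \<in> cyc_shifts m)"

definition K_step :: "nat list \<Rightarrow> nat \<Rightarrow> nat list \<Rightarrow> nat list \<Rightarrow> bool" where
  "K_step m n \<phi> \<psi> \<longleftrightarrow> \<phi> \<in> perms n \<and> \<psi> \<in> perms n \<and>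
     (\<exists>a b u v. \<phi> = a @ u @ b \<and> \<psi> = a @ v @ b \<and>
        length u = length m \<and> length v = length m \<and> K_same_part m (std u) (std v))"

definition K_equiv :: "nat list \<Rightarrow> nat \<Rightarrow> nat list \<Rightarrow> nat list \<Rightarrow> bool" where
  "K_equiv m n \<phi> \<psi> \<longleftrightarrow> \<phi> \<in> perms n \<and> \<psi> \<in> perms n \<and>
     (\<lambda>x y. K_step m n x y \<or> K_step m n y x)\<^sup>*\<^sup>* \<phi> \<psi>"

definition non_avoider :: "nat list \<Rightarrow> nat list \<Rightarrow> bool" where
  "non_avoider m \<phi> \<longleftrightarrow> (\<exists>a u b. \<phi> = a @ u @ b \<and> length u = length m \<and> std u \<in> cyc_shifts m)"

definition p_perm :: "nat list \<Rightarrow> nat \<Rightarrow> nat list" where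
  "p_perm m n = 1 # map (\<lambda>x. x + 1) m @ [length m + 2 ..< n + 1]"

definition swap12 :: "nat \<Rightarrow> nat" where
  "swap12 x = (if x = 1 then 2 else if x = 2 then 1 else x)"

definition q_perm :: "nat list \<Rightarrow> nat \<Rightarrow> nat list" where
  "q_perm m n = map swap12 (p_perm m n)"

end

theory Submission
  imports Defs
begin

text \<open>
  Call two words equivalent if one arises from the other by rotating hits in place; this refines
  \<open>K\<close>-equivalence. In a word \<open>x # u\<close> or \<open>u @ [x]\<close> with \<open>u\<close> a hit, the letter \<open>x\<close> can be
  slid across the hit to the other end while being exchanged for a letter of adjacent rank: after a
  rotation bringing that letter to the boundary, the exchange does not change the standardization of
  the hit. Hence the class of such a word depends only on the side of \<open>x\<close> and the parity of its
  rank.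

  By induction on the length, every non-avoider is then equivalent to a normal form \<open>x # u @ r\<close>
  with \<open>x\<close> of rank 0 or 1, \<open>u\<close> a hit and \<open>r\<close> increasing above \<open>u\<close>; normal forms with the same
  rank of \<open>x\<close> are equivalent, and \<open>p\<close>, \<open>q\<close> are those of rank 0 and 1. Words of length \<open>c + 2\<close>
  are handled by a parity game on the ranks of their two outer letters. In a longer word, two
  normalizations of shorter subwords bring the largest letter to the end, and then the prefix
  before it is normalized.
\<close>

section \<open>Ranks and standardization\<close>

definition rank :: "'a::linorder set \<Rightarrow> 'a \<Rightarrow> nat" where
  "rank A x = card {y \<in> A. y < x}"

lemma rank_strict_mono:
  assumes "finite A" "x \<in> A" "x < y"
  shows "rank A x < rank A y"
proof -
  have "{z \<in> A. z < x} \<subset> {z \<in> A. z < y}" using assms(2,3) by auto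
  then show ?thesis unfolding rank_def using assms(1) by (simp add: psubset_card_mono)
qed

lemma rank_less_card:
  assumes "finite A" "x \<in> A"
  shows "rank A x < card A"
proof -
  have "{y \<in> A. y < x} \<subset> A" using assms(2) by auto
  then show ?thesis unfolding rank_def using assms(1) by (simp add: psubset_card_mono)
qed

lemma rank_less_rank_iff:
  assumes "finite A" "x \<in> A" "y \<in> A"
  shows "rank A x < rank A y \<longleftrightarrow> x < y"
  using rank_strict_mono[OF assms(1,2)] rank_strict_mono[OF assms(1,3)]
  by (metis less_asym linorder_neqE)

lemma bij_betw_rank:
  assumes "finite A"
  shows "bij_betw (rank A) A {..<card A}"
proof -
  have inj: "inj_on (rank A) A"
    by (rule inj_onI) (metis assms rank_less_rank_iff less_irrefl linorder_neqE)
  moreover have "rank A ` A \<subseteq> {..<card A}" using rank_less_card[OF assms] by auto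
  moreover have "card (rank A ` A) = card {..<card A}" using card_image[OF inj] by simp
  ultimately show ?thesis unfolding bij_betw_def by (simp add: card_subset_eq)
qed

lemma rank_inj:
  assumes "finite A" "x \<in> A" "y \<in> A" "rank A x = rank A y"
  shows "x = y"
  using bij_betw_imp_inj_on[OF bij_betw_rank[OF assms(1)]] assms(2-4) inj_onD by metis

lemma rank_surj:
  assumes "finite A" "k < card A"
  obtains x where "x \<in> A" "rank A x = k"
  using bij_betw_imp_surj_on[OF bij_betw_rank[OF assms(1)]] assms(2) by (metis imageE lessThan_iff)

lemma rank_insert:
  assumes "finite A" "x \<notin> A"
  shows "rank (insert x A) w = (if x < w then Suc (rank A w) else rank A w)"
proof -
  have "{v \<in> insert x A. v < w} = (if x < w then insert x {v \<in> A. v < w} else {v \<in> A. v < w})"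
    by auto
  then show ?thesis using assms by (simp add: rank_def)
qed

lemma rank_Diff_singleton:
  assumes "finite A" "x \<in> A"
  shows "rank (A - {x}) y = (if x < y then rank A y - 1 else rank A y)"
proof (cases "x < y")
  case True
  then have "{z \<in> A. z < y} = insert x {z \<in> A - {x}. z < y}" using assms(2) by auto
  then show ?thesis using True assms(1) by (simp add: rank_def)
next
  case False
  then have "{z \<in> A. z < y} = {z \<in> A - {x}. z < y}" by auto
  then show ?thesis using False by (simp add: rank_def)
qed

lemma rank_Suc_between:
  assumes "finite A" "x \<in> A" "y \<in> A" "rank A y = Suc (rank A x)" "w \<in> A" "w \<noteq> x" "w \<noteq> y"
  shows "w < x \<longleftrightarrow> w < y"
proof -
  have "x < y" using assms(1-4) rank_less_rank_iff by (metis lessI)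
  moreover have "\<not> (x < w \<and> w < y)"
    using rank_less_rank_iff[OF assms(1)] assms by (metis Suc_lessD less_SucE not_less_eq)
  ultimately show ?thesis using assms(6) by (meson less_trans linorder_neqE)
qed

lemma Suc_rank_eq_card_imp_less:
  assumes "finite A" "x \<in> A" "Suc (rank A x) = card A" "y \<in> A" "y \<noteq> x"
  shows "y < x"
proof -
  have "{z \<in> A. z < x} \<subseteq> A - {x}" by auto
  moreover have "card {z \<in> A. z < x} = card (A - {x})" using assms(1-3) by (simp add: rank_def)
  ultimately have "{z \<in> A. z < x} = A - {x}" using assms(1) by (simp add: card_subset_eq)
  then show ?thesis using assms(4,5) by auto
qed

lemma exists_ge_of_rank_less_card:
  assumes "finite A" "B \<subseteq> A" "rank A x < card B"
  shows "\<exists>b\<in>B. x \<le> b"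
proof (rule ccontr)
  assume "\<not> (\<exists>b\<in>B. x \<le> b)"
  then have "B \<subseteq> {y \<in> A. y < x}" using assms(2) by auto
  then have "card B \<le> rank A x" unfolding rank_def using assms(1) by (intro card_mono) auto
  then show False using assms(3) by simp
qed

lemma rank_image_strict_mono:
  assumes "finite A" "strict_mono_on A f" "x \<in> A"
  shows "rank (f ` A) (f x) = rank A x"
proof -
  have "{y \<in> f ` A. y < f x} = f ` {y \<in> A. y < x}"
    using assms(2,3) by (auto simp: strict_mono_on_less)
  moreover have "inj_on f {y \<in> A. y < x}"
    using strict_mono_on_imp_inj_on[OF assms(2)] by (rule inj_on_subset) auto
  ultimately show ?thesis by (simp add: rank_def card_image)
qed

lemma card_le_eq_Suc_rank:
  assumes "finite A" "x \<in> A"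
  shows "card {y \<in> A. y \<le> x} = Suc (rank A x)"
proof -
  have "{y \<in> A. y \<le> x} = insert x {y \<in> A. y < x}" using assms(2) by auto
  then show ?thesis using assms(1) by (simp add: rank_def)
qed

lemma std_eq_map_rank: "std u = map (\<lambda>x. Suc (rank (set u) x)) u"
  by (simp add: std_def card_le_eq_Suc_rank)

lemma length_std [simp]: "length (std u) = length u"
  by (simp add: std_def)

lemma std_rotate: "std (rotate k u) = rotate k (std u)"
  by (simp add: std_def rotate_map)

lemma std_inj:
  assumes "set u = set v" "std u = std v"
  shows "u = v"
proof (rule nth_equalityI)
  show len: "length u = length v" using arg_cong[OF assms(2), of length] by simp
  fix i assume "i < length u"
  then have "std u ! i = std v ! i" using assms(2) by simp
  then have "rank (set u) (u ! i) = rank (set u) (v ! i)"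
    using \<open>i < length u\<close> len assms(1) by (simp add: std_eq_map_rank)
  then show "u ! i = v ! i"
    using \<open>i < length u\<close> len assms(1) by (metis finite_set nth_mem rank_inj)
qed

lemma std_Cons_cong:
  assumes "x \<notin> set z" "y \<notin> set z" "\<forall>w\<in>set z. w < x \<longleftrightarrow> w < y"
  shows "std (x # z) = std (y # z)"
proof -
  have "rank (set z) x = rank (set z) y"
    using assms(3) unfolding rank_def by (metis (mono_tags, lifting) Collect_cong)
  moreover have "x < w \<longleftrightarrow> y < w" if "w \<in> set z" for w
    using assms that by (metis linorder_neqE not_less_iff_gr_or_eq)
  ultimately show ?thesis using assms(1,2) by (simp add: std_eq_map_rank rank_insert)
qed

lemma std_map_strict_mono:
  assumes "strict_mono_on (set u) f"
  shows "std (map f u) = std u"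
  using rank_image_strict_mono[OF finite_set assms] by (simp add: std_eq_map_rank)

lemma std_perm:
  assumes "m \<in> perms c"
  shows "std m = m"
proof -
  have "rank {1..c} x = x - 1" if "x \<in> {1..c}" for x
  proof -
    have "{y \<in> {1..c}. y < x} = {1..<x}" using that by auto
    then show ?thesis by (simp add: rank_def)
  qed
  then show ?thesis using assms by (auto simp: perms_def std_eq_map_rank intro: map_idI)
qed

lemma exists_std_eq:
  assumes "finite S" "m \<in> perms (card S)"
  obtains u where "distinct u" "set u = S" "std u = m"
proof
  define l where "l = sorted_list_of_set S"
  define f where "f i = l ! (i - 1)" for i
  have l: "sorted_wrt (<) l" "length l = card S" "set l = S"
    using assms(1) by (simp_all add: l_def)
  have m: "distinct m" "set m = {1..card S}" using assms(2) by (simp_all add: perms_def)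
  have mono: "strict_mono_on (set m) f"
  proof (rule strict_mono_onI)
    fix i j assume "i \<in> set m" "j \<in> set m" "i < j"
    then show "f i < f j" using m(2) l(1,2) unfolding f_def by (auto intro: sorted_wrt_nth_less)
  qed
  show "std (map f m) = m" using std_map_strict_mono[OF mono] std_perm[OF assms(2)] by simp
  show "distinct (map f m)" using m(1) strict_mono_on_imp_inj_on[OF mono] by (simp add: distinct_map)
  have "f ` {1..card S} = set l"
  proof
    show "f ` {1..card S} \<subseteq> set l" using l(2) by (auto simp: f_def)
    show "set l \<subseteq> f ` {1..card S}"
      by (auto simp: f_def in_set_conv_nth l(2) image_iff intro!: bexI[of _ "Suc _"])
  qed
  then show "set (map f m) = S" using m(2) l(3) by simp
qed

lemma rotate_to_Cons:
  assumes "y \<in> set u"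
  shows "\<exists>k z. rotate k u = y # z"
proof -
  obtain i where i: "i < length u" "u ! i = y" using assms by (auto simp: in_set_conv_nth)
  then have "rotate i u = y # drop (Suc i) u @ take i u"
    using Cons_nth_drop_Suc[OF i(1)] by (simp add: rotate_drop_take)
  then show ?thesis by blast
qed

lemma upper_part_unique:
  fixes B C B' C' :: "'a::linorder set"
  assumes "B \<union> C = B' \<union> C'" "\<forall>b\<in>B. \<forall>z\<in>C. b < z" "\<forall>b\<in>B'. \<forall>z\<in>C'. b < z"
    and "finite C" "finite C'" "card C = card C'"
  shows "C = C'"
proof -
  have "C' \<subseteq> C"
  proof
    fix y assume y: "y \<in> C'"
    show "y \<in> C"
    proof (rule ccontr)
      assume "y \<notin> C"
      then have "y \<in> B" using y assms(1) by blast
      have "C \<subseteq> C'"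
      proof
        fix z assume "z \<in> C"
        then have "y < z" "z \<in> B' \<union> C'" using \<open>y \<in> B\<close> assms(1,2) by auto
        then show "z \<in> C'" using y assms(3) by (auto dest: less_asym)
      qed
      then have "C \<subset> C'" using y \<open>y \<notin> C\<close> by blast
      then show False using psubset_card_mono[OF assms(5) \<open>C \<subset> C'\<close>] assms(6) by simp
    qed
  qed
  from card_subset_eq[OF assms(4) this] show ?thesis using assms(6) by simp
qed

section \<open>A parity game on two ranks\<close>

text \<open>A state \<open>(i, j)\<close> stands for a word \<open>v # u @ [x]\<close> of length \<open>c + 2\<close> with \<open>u\<close> a hit, where
  \<open>i\<close> and \<open>j\<close> are the ranks of \<open>v\<close> and \<open>x\<close>; \<open>rank_without j i\<close> is the rank of \<open>v\<close> once \<open>x\<close> is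
  removed. The moves are those of \<open>bracketed_move_first\<close>, \<open>bracketed_move_last\<close> and, for
  \<open>c = 2\<close>, \<open>bracketed_swap\<close>.\<close>

definition rank_without :: "nat \<Rightarrow> nat \<Rightarrow> nat" where
  "rank_without j i = (if j < i then i - 1 else i)"

lemma rank_Diff_singleton_eq_rank_without:
  assumes "finite A" "x \<in> A" "y \<in> A"
  shows "rank (A - {x}) y = rank_without (rank A x) (rank A y)"
  using rank_Diff_singleton[OF assms(1,2)] rank_less_rank_iff[OF assms] by (simp add: rank_without_def)

context
  fixes c :: nat and P :: "nat \<Rightarrow> nat \<Rightarrow> bool"
  assumes two_le_c: "2 \<le> c"
    and move_first: "\<And>i j i'. P i j \<Longrightarrow> i' \<le> Suc c \<Longrightarrow> i' \<noteq> j \<Longrightarrow>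
      even (rank_without j i') = even (rank_without j i) \<Longrightarrow> P i' j"
    and move_last: "\<And>i j j'. P i j \<Longrightarrow> j' \<le> Suc c \<Longrightarrow> j' \<noteq> i \<Longrightarrow>
      even (rank_without i j') = even (rank_without i j) \<Longrightarrow> P i j'"
    and swap_first: "\<And>i j. c = 2 \<Longrightarrow> P i j \<Longrightarrow> \<exists>h \<le> Suc c. h \<noteq> i \<and> h \<noteq> j \<and> P h j"
begin

lemma game_top:
  assumes "P i (Suc c)" "i \<le> c"
  shows "\<exists>t \<le> 1. P t (Suc c)"
proof -
  define t :: nat where "t = (if even i then 0 else 1)"
  have "P t (Suc c)"
    using move_first[OF assms(1), of t] assms(2) two_le_c by (auto simp: rank_without_def t_def)
  then show ?thesis by (intro exI[of _ t]) (simp add: t_def)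
qed

lemma game_parity:
  assumes "P i j" "i \<le> c" "even (rank_without i j) = even c"
  shows "\<exists>t \<le> 1. P t (Suc c)"
proof -
  have "P i (Suc c)" using move_last[OF assms(1), of "Suc c"] assms(2,3) by (simp add: rank_without_def)
  then show ?thesis using game_top assms(2) by blast
qed

lemma game_c2_top:
  assumes "c = 2" "P 3 j" "j \<le> 2"
  shows "\<exists>t \<le> 1. P t (Suc c)"
proof -
  have "j = 0 \<or> j = 1 \<or> j = 2" using assms(3) by auto
  then have "P 3 0 \<or> P 3 1"
    using move_last[OF assms(2), of 0] assms(1,2) by (auto simp: rank_without_def)
  then have "P 1 0 \<or> P 0 1"
    using move_first[of 3 0 1] move_first[of 3 1 0] assms(1) by (auto simp: rank_without_def)
  then show ?thesis using game_parity[of 1 0] game_parity[of 0 1] assms(1)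
    by (auto simp: rank_without_def)
qed

lemma game_c2:
  assumes "c = 2" "P i j" "i \<le> 3" "j \<le> 3" "i \<noteq> j"
  shows "\<exists>t \<le> 1. P t (Suc c)"
proof -
  have zero_two: "\<exists>t \<le> 1. P t (Suc c)" if "P 0 2"
    using move_first[OF that, of 3] game_c2_top[OF assms(1), of 2] assms(1) by (simp add: rank_without_def)
  obtain h where h: "h \<le> 3" "h \<noteq> i" "h \<noteq> j" "P h j"
    using swap_first[OF assms(1,2)] assms(1) by auto
  consider "i = 3" | "i \<le> 2" "even (rank_without i j)" | "i = 0" "j = 2" | "i = 1" "j = 2" | "i = 2" "j = 1"
    using assms(3-5) by (auto simp: rank_without_def le_Suc_eq numeral_eq_Suc)
  then show ?thesis
  proof cases
    case 1
    then show ?thesis using game_c2_top[OF assms(1), of j] assms(2,4,5) by simp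
  next
    case 2
    then show ?thesis using game_parity[OF assms(2)] assms(1) by simp
  next
    case 3
    then show ?thesis using zero_two assms(2) by simp
  next
    case 4
    then have "h = 0 \<or> h = 3" "P h 2" using h by auto
    then show ?thesis using zero_two game_c2_top[OF assms(1), of 2] by auto
  next
    case 5
    then have "h = 0 \<or> h = 3" "P h 1" using h by auto
    then show ?thesis using game_parity[of 0 1] game_c2_top[OF assms(1), of 1] assms(1)
      by (auto simp: rank_without_def)
  qed
qed

lemma game_low_first:
  assumes "3 \<le> c" "P i j" "i \<le> Suc c" "j \<le> Suc c" "i \<noteq> j"
  obtains t j' where "t \<le> 1" "2 \<le> j'" "j' \<le> Suc c" "P t j'"
proof -
  obtain j' where j': "P i j'" "2 \<le> j'" "j' \<le> Suc c" "j' \<noteq> i"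
  proof (cases "2 \<le> j")
    case True
    then show ?thesis using that assms by blast
  next
    case False
    have "\<exists>j'\<in>{2, 3, 4}. j' \<noteq> i \<and> even (rank_without i j') = even (rank_without i j)"
      by (cases "i < 2"; cases "even (rank_without i j)") (auto simp: rank_without_def)
    then obtain j' where "j' \<in> {2, 3, 4}" "j' \<noteq> i" "even (rank_without i j') = even (rank_without i j)"
      by blast
    then show ?thesis using that move_last[OF assms(2), of j'] assms(1) by auto
  qed
  define t :: nat where "t = (if even (rank_without j' i) then 0 else 1)"
  have "t \<le> 1" "t < j'" using j'(2) by (auto simp: t_def)
  then have "P t j'"
    using move_first[OF j'(1), of t] j'(3) by (auto simp: t_def rank_without_def)
  then show ?thesis using that \<open>t \<le> 1\<close> j'(2,3) by blast
qed

lemma game_c3: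
  assumes "c = 3" "P t 3" "t \<le> 1"
  shows "\<exists>t \<le> 1. P t (Suc c)"
proof -
  have "t = 0 \<or> t = 1" using assms(3) by auto
  then show ?thesis
  proof
    assume "t = 0"
    then have "P 0 1" using move_last[of 0 3 1] assms(2) by (simp add: rank_without_def)
    then have "P 3 1" using move_first[of 0 1 3] assms(1) by (simp add: rank_without_def)
    then show ?thesis using game_parity[of 3 1] assms(1) by (simp add: rank_without_def)
  next
    assume "t = 1"
    then have "P 4 3" using move_first[of 1 3 4] assms(1,2) by (simp add: rank_without_def)
    then have "P 4 1" using move_last[of 4 3 1] assms(1) by (simp add: rank_without_def)
    then have "P 2 1" using move_first[of 4 1 2] assms(1) by (simp add: rank_without_def)
    then show ?thesis using game_parity[of 2 1] assms(1) by (simp add: rank_without_def)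
  qed
qed

lemma game_c_ge_3:
  assumes "3 \<le> c" "P t j" "t \<le> 1" "2 \<le> j" "j \<le> Suc c"
  shows "\<exists>t \<le> 1. P t (Suc c)"
proof (cases "even (j - 1) = even c")
  case True
  then show ?thesis using game_parity[OF assms(2)] assms(1,3,4) by (simp add: rank_without_def)
next
  case False
  then have j: "even j = even c" using assms(4) by auto
  have "c = 3 \<or> (even c \<and> 4 \<le> c) \<or> (odd c \<and> 5 \<le> c)" using assms(1) by presburger
  then consider "c = 3" | "even c" "4 \<le> c" | "odd c" "5 \<le> c" by blast
  then show ?thesis
  proof cases
    case 1
    then have "j = 3" using j assms(4,5) by presburger
    then show ?thesis using game_c3 1 assms(2,3) by simp
  next
    case 2
    have "P t 2" using move_last[OF assms(2), of 2] assms(3,4) j 2 by (auto simp: rank_without_def)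
    then have "P (3 + t) 2" using move_first[of t 2 "3 + t"] assms(3) 2 by (auto simp: rank_without_def)
    then show ?thesis using game_parity[of "3 + t" 2] assms(3) 2 by (simp add: rank_without_def)
  next
    case 3
    have "P t 3" using move_last[OF assms(2), of 3] assms(3,4) j 3 by (auto simp: rank_without_def)
    moreover have "t = 0 \<or> t = 1" using assms(3) by auto
    ultimately have "P (5 - t) 3" using move_first[of t 3 "5 - t"] 3 by (auto simp: rank_without_def)
    then show ?thesis using game_parity[of "5 - t" 3] assms(3) 3 by (auto simp: rank_without_def)
  qed
qed

lemma game_reaches_top:
  assumes "P i j" "i \<le> Suc c" "j \<le> Suc c" "i \<noteq> j"
  shows "\<exists>t \<le> 1. P t (Suc c)"
proof (cases "c = 2")
  case True
  then show ?thesis using game_c2 assms by simp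
next
  case False
  then have "3 \<le> c" using two_le_c by simp
  then obtain t j' where "t \<le> 1" "2 \<le> j'" "j' \<le> Suc c" "P t j'"
    using game_low_first assms by blast
  then show ?thesis using game_c_ge_3 \<open>3 \<le> c\<close> by blast
qed

end

section \<open>Hits and rotation equivalence\<close>

locale cyclic_pattern =
  fixes m :: "nat list" and c :: nat
  assumes one_less_c: "1 < c" and m_perms: "m \<in> perms c"
begin

abbreviation hit :: "nat list \<Rightarrow> bool" where
  "hit u \<equiv> std u \<in> cyc_shifts m"

lemma length_m: "length m = c"
  using m_perms distinct_card by (fastforce simp: perms_def)

lemma m_in_cyc_shifts: "m \<in> cyc_shifts m"
  using one_less_c length_m by (auto simp: cyc_shifts_def intro: exI[of _ 0])

lemma rotate_in_cyc_shifts: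
  assumes "s \<in> cyc_shifts m"
  shows "rotate k s \<in> cyc_shifts m"
proof -
  obtain a where "s = rotate a m" using assms by (auto simp: cyc_shifts_def)
  then have "rotate k s = rotate ((k + a) mod c) m"
    by (simp add: rotate_rotate) (subst rotate_conv_mod, simp add: length_m)
  moreover have "(k + a) mod c < c" using one_less_c by simp
  ultimately show ?thesis using length_m by (auto simp: cyc_shifts_def)
qed

lemma hit_length:
  assumes "hit u"
  shows "length u = c"
proof -
  obtain a where "std u = rotate a m" using assms by (auto simp: cyc_shifts_def)
  then have "length (std u) = length m" by simp
  then show ?thesis by (simp add: length_m)
qed

lemma hit_rotate: "hit u \<Longrightarrow> hit (rotate k u)"
  by (simp add: std_rotate rotate_in_cyc_shifts)

lemma hit_eq_rotate:
  assumes "hit u" "hit v" "set u = set v"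
  obtains k where "v = rotate k u"
proof -
  obtain a b where a: "std u = rotate a m" "a < c" and b: "std v = rotate b m"
    using assms(1,2) length_m unfolding cyc_shifts_def by blast
  have "rotate (b + c - a) (rotate a m) = rotate b (rotate c m)"
    using a(2) by (simp add: rotate_rotate)
  also have "rotate c m = m" using length_m by simp
  finally have "std (rotate (b + c - a) u) = std v" using a(1) b by (simp add: std_rotate)
  then show ?thesis using that assms(3) std_inj by (metis set_rotate)
qed

lemma exists_hit:
  assumes "finite S" "card S = c"
  obtains u where "distinct u" "set u = S" "hit u"
proof -
  have "m \<in> perms (card S)" using assms(2) m_perms by simp
  with exists_std_eq[OF assms(1)] m_in_cyc_shifts that show ?thesis by metis
qed

lemma non_avoider_iff: "non_avoider m w \<longleftrightarrow> (\<exists>a u b. w = a @ u @ b \<and> hit u)"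
  by (auto simp: non_avoider_def length_m dest: hit_length)

lemma non_avoiderI: "hit u \<Longrightarrow> non_avoider m (a @ u @ b)"
  using non_avoider_iff by blast

lemma non_avoider_append: "non_avoider m v \<Longrightarrow> non_avoider m (a @ v @ b)"
  by (auto simp: non_avoider_iff) (metis append.assoc)

definition rotate_step :: "nat list \<Rightarrow> nat list \<Rightarrow> bool" where
  "rotate_step v w \<longleftrightarrow> (\<exists>a u b k. v = a @ u @ b \<and> w = a @ rotate k u @ b \<and> hit u)"

definition rot_equiv :: "nat list \<Rightarrow> nat list \<Rightarrow> bool" (infix "\<approx>" 50) where
  "v \<approx> w \<longleftrightarrow> rotate_step\<^sup>*\<^sup>* v w"

lemma symp_rotate_step: "symp rotate_step"
proof (rule sympI)
  fix v w assume "rotate_step v w"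
  then obtain a u b k where vw: "v = a @ u @ b" "w = a @ rotate k u @ b" "hit u"
    by (auto simp: rotate_step_def)
  obtain j where "u = rotate j (rotate k u)"
    using hit_eq_rotate[OF hit_rotate[OF vw(3)] vw(3)] by auto
  then show "rotate_step w v"
    using vw hit_rotate[OF vw(3)] unfolding rotate_step_def
    by (intro exI[of _ a] exI[of _ "rotate k u"] exI[of _ b] exI[of _ j]) simp
qed

lemma rot_equiv_refl [simp]: "w \<approx> w"
  by (simp add: rot_equiv_def)

lemma rot_equiv_sym: "v \<approx> w \<Longrightarrow> w \<approx> v"
  using sympD[OF symp_rtranclp[OF symp_rotate_step]] by (simp add: rot_equiv_def)

lemma rot_equiv_trans: "u \<approx> v \<Longrightarrow> v \<approx> w \<Longrightarrow> u \<approx> w"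
  by (simp add: rot_equiv_def)

lemma rot_equiv_append:
  assumes "v \<approx> w"
  shows "a @ v @ b \<approx> a @ w @ b"
proof -
  have step: "rotate_step (a @ v' @ b) (a @ w' @ b)" if "rotate_step v' w'" for v' w'
    using that unfolding rotate_step_def by (metis append.assoc)
  from assms show ?thesis
    unfolding rot_equiv_def
    by (induction rule: rtranclp_induct) (auto intro: rtranclp.rtrancl_into_rtrancl step)
qed

lemma rot_equiv_Cons: "v \<approx> w \<Longrightarrow> x # v \<approx> x # w"
  using rot_equiv_append[of v w "[x]" "[]"] by simp

lemma rot_equiv_snoc: "v \<approx> w \<Longrightarrow> v @ [x] \<approx> w @ [x]"
  using rot_equiv_append[of v w "[]" "[x]"] by simp

lemma rot_equiv_invariant:
  assumes "\<And>v w. rotate_step v w \<Longrightarrow> f v = f w" "v \<approx> w"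
  shows "f v = f w"
  using assms(2) unfolding rot_equiv_def by (induction rule: rtranclp_induct) (auto dest: assms(1))

lemma rot_equiv_set: "v \<approx> w \<Longrightarrow> set v = set w"
  by (rule rot_equiv_invariant) (auto simp: rotate_step_def)

lemma rot_equiv_length: "v \<approx> w \<Longrightarrow> length v = length w"
  by (rule rot_equiv_invariant) (auto simp: rotate_step_def)

lemma rot_equiv_distinct: "v \<approx> w \<Longrightarrow> distinct v \<longleftrightarrow> distinct w"
  by (rule rot_equiv_invariant) (auto simp: rotate_step_def)

lemma rot_equiv_rotate:
  assumes "hit u"
  shows "u \<approx> rotate k u"
proof -
  have "rotate_step u (rotate k u)" unfolding rotate_step_def using assms
    by (intro exI[of _ "[]"] exI[of _ u] exI[of _ "[]"] exI[of _ k]) simp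
  then show ?thesis by (simp add: rot_equiv_def)
qed

lemma hits_rot_equiv:
  assumes "hit u" "hit v" "set u = set v"
  shows "u \<approx> v"
proof -
  obtain k where "v = rotate k u" using hit_eq_rotate[OF assms] .
  then show ?thesis using rot_equiv_rotate[OF assms(1)] by simp
qed

lemma hit_snoc_slide:
  assumes "hit u" "distinct (u @ [x])" "y \<in> set u" "\<forall>w\<in>set u - {y}. w < x \<longleftrightarrow> w < y"
  obtains u' where "hit u'" "u @ [x] \<approx> y # u'"
proof -
  obtain k z where kz: "rotate k u = y # z" using rotate_to_Cons[OF assms(3)] by blast
  have "distinct (rotate k u)" "set (rotate k u) = set u" using assms(2) by simp_all
  then have "std (x # z) = std (y # z)"
    using assms(2,4) kz by (intro std_Cons_cong) auto
  then have "std (z @ [x]) = rotate 1 (std (rotate k u))"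
    using std_rotate[of 1 "x # z"] kz by simp
  then have "hit (z @ [x])" using assms(1) rotate_in_cyc_shifts[of "std u" "Suc k"] by (simp add: std_rotate)
  moreover have "u @ [x] \<approx> y # z @ [x]"
    using rot_equiv_snoc[OF rot_equiv_rotate[OF assms(1)], of x k] kz by simp
  ultimately show ?thesis using that by blast
qed

lemma hit_Cons_slide:
  assumes "hit u" "distinct (x # u)" "y \<in> set u" "\<forall>w\<in>set u - {y}. w < x \<longleftrightarrow> w < y"
  obtains u' where "hit u'" "x # u \<approx> u' @ [y]"
proof -
  obtain k z where kz: "rotate k u = y # z" using rotate_to_Cons[OF assms(3)] by blast
  have "distinct (rotate k u)" "set (rotate k u) = set u" using assms(2) by simp_all
  then have "std (x # z) = std (rotate k u)"
    using assms(2,4) kz by (simp only: kz) (intro std_Cons_cong; auto)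
  then have "hit (x # z)" using assms(1) by (simp add: std_rotate rotate_in_cyc_shifts)
  moreover have "x # u \<approx> x # rotate (Suc k) u" using rot_equiv_Cons[OF rot_equiv_rotate[OF assms(1)]] .
  then have "x # u \<approx> (x # z) @ [y]" using kz by simp
  ultimately show ?thesis using that by blast
qed

subsection \<open>Words of length \<open>c + 1\<close>\<close>

definition framed :: "nat set \<Rightarrow> bool \<Rightarrow> nat \<Rightarrow> nat list \<Rightarrow> bool" where
  "framed T b x w \<longleftrightarrow> distinct w \<and> set w = T \<and> (\<exists>u. hit u \<and> w = (if b then x # u else u @ [x]))"

lemma framed_mem: "framed T b x w \<Longrightarrow> x \<in> T"
  by (auto simp: framed_def split: if_splits)

context
  fixes T :: "nat set"
  assumes finite_T: "finite T" and card_T: "card T = Suc c"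
begin

lemma framed_exists:
  assumes "x \<in> T"
  obtains w where "framed T b x w"
proof -
  have "finite (T - {x})" "card (T - {x}) = c" using assms finite_T card_T by simp_all
  then obtain u where u: "distinct u" "set u = T - {x}" "hit u" using exists_hit by blast
  then have "framed T b x (if b then x # u else u @ [x])" using assms by (auto simp: framed_def)
  then show ?thesis using that by blast
qed

lemma framed_unique:
  assumes "framed T b x v" "framed T b x w"
  shows "v \<approx> w"
proof -
  obtain u u' where u: "hit u" "v = (if b then x # u else u @ [x])"
    and u': "hit u'" "w = (if b then x # u' else u' @ [x])"
    using assms by (auto simp: framed_def)
  have "set u = T - {x}" "set u' = T - {x}"
    using assms u u' by (auto simp: framed_def split: if_splits)
  then have "u \<approx> u'" using hits_rot_equiv u(1) u'(1) by simp
  then show ?thesis using u(2) u'(2) by (auto intro: rot_equiv_Cons rot_equiv_snoc)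
qed

lemma framed_adjacent:
  assumes "framed T b x w" "y \<in> T" "rank T y = Suc (rank T x) \<or> rank T x = Suc (rank T y)"
  shows "\<exists>w'. framed T (\<not> b) y w' \<and> w \<approx> w'"
proof -
  obtain u where u: "hit u" "w = (if b then x # u else u @ [x])" "distinct w" "set w = T"
    using assms(1) by (auto simp: framed_def)
  have x: "x \<in> T" using framed_mem[OF assms(1)] .
  have "y \<noteq> x" using assms(3) by auto
  then have y: "y \<in> set u" using assms(2) u by (auto split: if_splits)
  have gap: "\<forall>v\<in>set u - {y}. v < x \<longleftrightarrow> v < y"
    using rank_Suc_between[OF finite_T x assms(2)] rank_Suc_between[OF finite_T assms(2) x]
      assms(3) u by (auto split: if_splits)
  show ?thesis
  proof (cases b)
    case True
    then obtain u' where u': "hit u'" "x # u \<approx> u' @ [y]"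
      using hit_Cons_slide[OF u(1) _ y gap] u by auto
    have "distinct (u' @ [y])" "set (u' @ [y]) = T"
      using rot_equiv_set[OF u'(2)] rot_equiv_distinct[OF u'(2)] u True by auto
    then have "framed T False y (u' @ [y])" using u'(1) by (auto simp: framed_def)
    then show ?thesis using u'(2) u True by auto
  next
    case False
    then obtain u' where u': "hit u'" "u @ [x] \<approx> y # u'"
      using hit_snoc_slide[OF u(1) _ y gap] u by auto
    have "distinct (y # u')" "set (y # u') = T"
      using rot_equiv_set[OF u'(2)] rot_equiv_distinct[OF u'(2)] u False by auto
    then have "framed T True y (y # u')" using u'(1) by (auto simp: framed_def)
    then show ?thesis using u'(2) u False by auto
  qed
qed

lemma framed_to_rank_zero:
  assumes "framed T b x w" "y \<in> T" "rank T y = 0"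
  shows "\<exists>w'. framed T (b \<longleftrightarrow> even (rank T x)) y w' \<and> w \<approx> w'"
  using assms(1)
proof (induction "rank T x" arbitrary: x b w)
  case 0
  then have "x = y" using rank_inj[OF finite_T] framed_mem assms(2,3) by metis
  then show ?case using 0 by auto
next
  case (Suc k)
  have "k < card T" using Suc.hyps(2) rank_less_card[OF finite_T framed_mem[OF Suc.prems]] by simp
  then obtain z where z: "z \<in> T" "rank T z = k" using rank_surj[OF finite_T] by blast
  obtain w1 where w1: "framed T (\<not> b) z w1" "w \<approx> w1"
    using framed_adjacent[OF Suc.prems z(1)] Suc.hyps(2) z(2) by auto
  have "(\<not> b \<longleftrightarrow> even k) = (b \<longleftrightarrow> even (rank T x))"
    using Suc.hyps(2)[symmetric] by (cases b) auto
  then obtain w2 where "framed T (b \<longleftrightarrow> even (rank T x)) y w2" "w1 \<approx> w2"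
    using Suc.hyps(1)[OF z(2)[symmetric] w1(1)] z(2) by auto
  then show ?case using w1(2) rot_equiv_trans by blast
qed

lemma framed_move:
  assumes "framed T b x w" "y \<in> T"
  shows "\<exists>w'. framed T (b \<longleftrightarrow> (even (rank T x) \<longleftrightarrow> even (rank T y))) y w' \<and> w \<approx> w'"
proof -
  let ?b = "b \<longleftrightarrow> (even (rank T x) \<longleftrightarrow> even (rank T y))"
  obtain y0 where y0: "y0 \<in> T" "rank T y0 = 0" using rank_surj[OF finite_T, of 0] card_T by auto
  obtain w' where w': "framed T ?b y w'" using framed_exists[OF assms(2)] .
  obtain v where v: "framed T (b \<longleftrightarrow> even (rank T x)) y0 v" "w \<approx> v"
    using framed_to_rank_zero[OF assms(1) y0] by blast
  obtain v' where v': "framed T (?b \<longleftrightarrow> even (rank T y)) y0 v'" "w' \<approx> v'"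
    using framed_to_rank_zero[OF w' y0] by blast
  have "(?b \<longleftrightarrow> even (rank T y)) = (b \<longleftrightarrow> even (rank T x))" by auto
  then have "v \<approx> v'" using framed_unique[OF v(1)] v'(1) by simp
  then have "w \<approx> w'" using v(2) v'(2) by (meson rot_equiv_sym rot_equiv_trans)
  then show ?thesis using w' by blast
qed

lemma framed_to_low_rank:
  assumes "framed T b x w"
  shows "\<exists>y w'. y \<in> T \<and> rank T y \<le> 1 \<and> framed T b' y w' \<and> w \<approx> w'"
proof -
  define k :: nat where "k = (if b' = (b \<longleftrightarrow> even (rank T x)) then 0 else 1)"
  have "k < card T" using card_T one_less_c by (simp add: k_def)
  then obtain y where y: "y \<in> T" "rank T y = k" using rank_surj[OF finite_T] by blast
  have "b' = (b \<longleftrightarrow> (even (rank T x) \<longleftrightarrow> even (rank T y)))" using y(2) by (auto simp: k_def)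
  then show ?thesis using framed_move[OF assms y(1)] y k_def by auto
qed

end

subsection \<open>Normal forms\<close>

definition normal_form :: "nat set \<Rightarrow> nat \<Rightarrow> nat list \<Rightarrow> bool" where
  "normal_form T k w \<longleftrightarrow> distinct w \<and> set w = T \<and>
     (\<exists>x u r. w = x # u @ r \<and> hit u \<and> rank T x = k \<and> sorted_wrt (<) r \<and> (\<forall>y\<in>set u. \<forall>z\<in>set r. y < z))"

lemma normal_formE:
  assumes "normal_form T k w"
  obtains x u r where "w = x # u @ r" "hit u" "rank T x = k" "sorted_wrt (<) r"
    "\<forall>y\<in>set u. \<forall>z\<in>set r. y < z" "distinct w" "set w = T"
  using assms unfolding normal_form_def by blast

lemma normal_form_framed: "framed T True x w \<Longrightarrow> normal_form T (rank T x) w"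
  unfolding framed_def normal_form_def by (metis append_Nil2 empty_iff empty_set sorted_wrt.simps(1))

lemma normal_form_unique:
  assumes "normal_form T k v" "normal_form T k w"
  shows "v \<approx> w"
proof -
  obtain x u r where v: "v = x # u @ r" "hit u" "rank T x = k" "sorted_wrt (<) r"
    "\<forall>y\<in>set u. \<forall>z\<in>set r. y < z" "distinct v" "set v = T"
    using assms(1) by (rule normal_formE)
  obtain x' u' r' where w: "w = x' # u' @ r'" "hit u'" "rank T x' = k" "sorted_wrt (<) r'"
    "\<forall>y\<in>set u'. \<forall>z\<in>set r'. y < z" "distinct w" "set w = T"
    using assms(2) by (rule normal_formE)
  have "finite T" "x \<in> T" "x' \<in> T" using v(1,7) w(1,7) by auto
  then have "x = x'" by (rule rank_inj) (simp add: v(3) w(3))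
  have "length v = length w" using v(6,7) w(6,7) by (metis distinct_card)
  then have "card (set r) = card (set r')"
    using v w hit_length by (simp add: distinct_card)
  moreover have "set u \<union> set r = set u' \<union> set r'" using v w \<open>x = x'\<close> by auto
  ultimately have "set r = set r'"
    using upper_part_unique[of "set u" "set r" "set u'" "set r'"] v(5) w(5) by simp
  then have "r = r'" using v(4) w(4) strict_sorted_equal by blast
  then have "set u = set u'" using v w \<open>x = x'\<close> by auto
  then have "u \<approx> u'" using hits_rot_equiv v(2) w(2) by blast
  then show ?thesis using rot_equiv_append[of u u' "[x]" r] v(1) w(1) \<open>x = x'\<close> \<open>r = r'\<close> by simp
qed

lemma normal_form_snoc:
  assumes "normal_form T k w" "\<forall>y\<in>T. y < M"
  shows "normal_form (insert M T) k (w @ [M])"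
proof -
  obtain x u r where w: "w = x # u @ r" "hit u" "rank T x = k" "sorted_wrt (<) r"
    "\<forall>y\<in>set u. \<forall>z\<in>set r. y < z" "distinct w" "set w = T"
    using assms(1) by (rule normal_formE)
  have "finite T" "M \<notin> T" "x < M" using w(1,7) assms(2) by auto
  then have "rank (insert M T) x = k" using rank_insert[of T M x] w(3) by simp
  moreover have "sorted_wrt (<) (r @ [M])" using w assms(2) by (auto simp: sorted_wrt_append)
  ultimately show ?thesis using w assms(2) unfolding normal_form_def
    by (intro conjI exI[of _ x] exI[of _ u] exI[of _ "r @ [M]"]) auto
qed

lemma normal_form_snocE:
  assumes "normal_form T k w" "k < c" "Suc c < length w"
  obtains w' M where "w = w' @ [M]" "non_avoider m w'" "\<forall>y\<in>set w'. y < M"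
proof -
  obtain x u r where w: "w = x # u @ r" "hit u" "rank T x = k" "sorted_wrt (<) r"
    "\<forall>y\<in>set u. \<forall>z\<in>set r. y < z" "distinct w" "set w = T"
    using assms(1) by (rule normal_formE)
  have "r \<noteq> []" using w(1,2) assms(3) hit_length by auto
  then obtain r' M where r: "r = r' @ [M]" by (metis rev_exhaust)
  have "\<forall>y\<in>set u \<union> set r'. y < M" using w(4,5) r by (auto simp: sorted_wrt_append)
  moreover have "x < M"
  proof -
    have "rank T x < card (set u)" using w hit_length assms(2) by (simp add: distinct_card)
    then obtain y where "y \<in> set u" "x \<le> y"
      using exists_ge_of_rank_less_card[of T "set u" x] w by auto
    then show ?thesis using calculation by (meson UnI1 le_less_trans)
  qed
  moreover have "non_avoider m (x # u @ r')" using non_avoiderI[OF w(2), of "[x]" r'] by simp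
  ultimately show ?thesis using that w(1) r by auto
qed

lemma p_perm_normal_form:
  assumes "c < n"
  shows "normal_form {1..n} 0 (p_perm m n)"
proof -
  have m: "set m = {1..c}" "distinct m" using m_perms by (simp_all add: perms_def)
  define r where "r = [c + 2..<n + 1]"
  have p: "p_perm m n = 1 # map Suc m @ r" by (simp add: p_perm_def length_m r_def)
  have r: "set r = {c + 2..n}" "distinct r" by (auto simp: r_def)
  have sorted_r: "sorted_wrt (<) r" unfolding r_def by (rule sorted_wrt_upt)
  have "strict_mono_on (set m) Suc" by (simp add: strict_mono_on_def)
  then have "hit (map Suc m)"
    using std_map_strict_mono std_perm[OF m_perms] m_in_cyc_shifts by metis
  moreover have "rank {1..n} 1 = 0" by (simp add: rank_def)
  moreover have "distinct (p_perm m n)" using m r by (auto simp: p distinct_map)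
  moreover have "set (p_perm m n) = {1..n}" using m r assms by (auto simp: p)
  moreover have "\<forall>y\<in>set (map Suc m). \<forall>z\<in>set r. y < z" using m r by auto
  ultimately show ?thesis using sorted_r unfolding normal_form_def p by blast
qed

lemma q_perm_normal_form:
  assumes "c < n"
  shows "normal_form {1..n} 1 (q_perm m n)"
proof -
  have m: "set m = {1..c}" "distinct m" using m_perms by (simp_all add: perms_def)
  define r where "r = [c + 2..<n + 1]"
  have sorted_r: "sorted_wrt (<) r" unfolding r_def by (rule sorted_wrt_upt)
  have "p_perm m n = 1 # map Suc m @ r" by (simp add: p_perm_def length_m r_def)
  moreover have "map swap12 r = r" using one_less_c by (auto intro!: map_idI simp: swap12_def r_def)
  ultimately have q: "q_perm m n = 2 # map (swap12 \<circ> Suc) m @ r"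
    by (simp add: q_perm_def swap12_def[of "Suc 0"])
  have "strict_mono_on (set m) (swap12 \<circ> Suc)"
    using m(1) by (auto simp: strict_mono_on_def swap12_def)
  then have "hit (map (swap12 \<circ> Suc) m)"
    using std_map_strict_mono std_perm[OF m_perms] m_in_cyc_shifts by metis
  moreover have "rank {1..n} 2 = 1"
  proof -
    have "{y \<in> {1..n}. y < 2} = {1}" using assms by auto
    then show ?thesis by (simp add: rank_def)
  qed
  moreover have "distinct (q_perm m n)" "set (q_perm m n) = {1..n}"
  proof -
    have inv: "swap12 (swap12 x) = x" for x by (simp add: swap12_def)
    have p: "distinct (p_perm m n)" "set (p_perm m n) = {1..n}"
      using p_perm_normal_form[OF assms] by (simp_all add: normal_form_def)
    have "inj swap12" using inv by (metis injI)
    then show "distinct (q_perm m n)"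
      using p(1) by (simp add: q_perm_def distinct_map inj_on_subset[OF _ subset_UNIV])
    have sub: "swap12 ` {1..n} \<subseteq> {1..n}" using assms one_less_c by (auto simp: swap12_def)
    moreover have "{1..n} \<subseteq> swap12 ` {1..n}"
    proof
      fix x assume "x \<in> {1..n}"
      then have "swap12 x \<in> {1..n}" using sub by blast
      then show "x \<in> swap12 ` {1..n}" using inv[of x] by (metis image_eqI)
    qed
    ultimately show "set (q_perm m n) = {1..n}" using p(2) by (simp add: q_perm_def)
  qed
  moreover have "\<forall>y\<in>set (map (swap12 \<circ> Suc) m). \<forall>z\<in>set r. y < z"
    using m(1) by (auto simp: swap12_def r_def)
  ultimately show ?thesis using sorted_r unfolding normal_form_def q by blast
qed

lemma rot_equiv_K_equiv:
  assumes "\<phi> \<in> perms n" "\<phi> \<approx> \<psi>"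
  shows "K_equiv m n \<phi> \<psi>"
  using assms(2) unfolding rot_equiv_def
proof (induction rule: rtranclp_induct)
  case base
  then show ?case using assms(1) by (simp add: K_equiv_def)
next
  case (step \<chi> \<psi>)
  obtain a u b k where \<chi>: "\<chi> = a @ u @ b" "\<psi> = a @ rotate k u @ b" "hit u"
    using step.hyps(2) by (auto simp: rotate_step_def)
  have "\<chi> \<in> perms n" using step.IH by (simp add: K_equiv_def)
  moreover have "\<psi> \<in> perms n" using calculation \<chi> by (auto simp: perms_def)
  moreover have "length u = length m" using hit_length[OF \<chi>(3)] length_m by simp
  ultimately have "K_step m n \<chi> \<psi>"
    using \<chi> hit_rotate[OF \<chi>(3)] unfolding K_step_def K_same_part_def by fastforce
  then show ?case using step.IH unfolding K_equiv_def
    by (metis (mono_tags, lifting) rtranclp.rtrancl_into_rtrancl \<open>\<psi> \<in> perms n\<close>)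
qed

subsection \<open>Reduction of non-avoiders\<close>

definition normalizable :: "nat list \<Rightarrow> bool" where
  "normalizable w \<longleftrightarrow> (\<exists>k w'. k \<le> 1 \<and> normal_form (set w) k w' \<and> w \<approx> w')"

lemma framed_of_non_avoider:
  assumes "distinct w" "length w = Suc c" "non_avoider m w"
  shows "\<exists>b x. framed (set w) b x w"
proof -
  obtain a u b where w: "w = a @ u @ b" "hit u" using assms(3) non_avoider_iff by blast
  then have "length a + length b = 1" using assms(2) hit_length by simp
  then consider x where "a = [x]" "b = []" | x where "a = []" "b = [x]"
    by (cases a) (auto simp: length_Suc_conv)
  then show ?thesis
  proof cases
    case (1 x)
    then have "framed (set w) True x w" using assms(1) w by (auto simp: framed_def)
    then show ?thesis by blast
  next
    case (2 x)
    then have "framed (set w) False x w" using assms(1) w by (auto simp: framed_def)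
    then show ?thesis by blast
  qed
qed

lemma normalizable_length_Suc_c:
  assumes "distinct w" "length w = Suc c" "non_avoider m w"
  shows "normalizable w"
proof -
  obtain b x where "framed (set w) b x w" using framed_of_non_avoider[OF assms] by blast
  moreover have "card (set w) = Suc c" using assms(1,2) by (simp add: distinct_card)
  ultimately obtain y w' where "rank (set w) y \<le> 1" "framed (set w) True y w'" "w \<approx> w'"
    using framed_to_low_rank[of "set w"] by blast
  then show ?thesis using normal_form_framed unfolding normalizable_def by blast
qed

lemma hit_pair:
  assumes "c = 2" "a \<noteq> b"
  shows "hit [a, b]"
proof -
  obtain p q where pq: "m = [p, q]"
    using length_m assms(1) by (auto simp: length_Suc_conv numeral_2_eq_2)
  have "{1..(2::nat)} = {1, 2}" by auto
  then have "{p, q} = {1, 2}" "p \<noteq> q" using m_perms assms(1) pq by (auto simp: perms_def)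
  then have "m = [1, 2] \<or> m = [2, 1]" using pq by (auto simp: doubleton_eq_iff)
  then have shifts: "[1, 2] \<in> cyc_shifts m" "[2, 1] \<in> cyc_shifts m"
    using m_in_cyc_shifts rotate_in_cyc_shifts[OF m_in_cyc_shifts, of 1] by auto
  show ?thesis
  proof (cases "a < b")
    case True
    then have "{y \<in> set [a, b]. y \<le> a} = {a}" "{y \<in> set [a, b]. y \<le> b} = {a, b}" by auto
    then have "std [a, b] = [1, 2]" using assms(2) by (simp add: std_def)
    then show ?thesis using shifts by simp
  next
    case False
    then have "{y \<in> set [a, b]. y \<le> a} = {a, b}" "{y \<in> set [a, b]. y \<le> b} = {b}" using assms(2) by auto
    then have "std [a, b] = [2, 1]" using assms(2) by (simp add: std_def)
    then show ?thesis using shifts by simp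
  qed
qed

definition bracketed :: "nat set \<Rightarrow> nat \<Rightarrow> nat \<Rightarrow> nat list \<Rightarrow> bool" where
  "bracketed U v x w \<longleftrightarrow> distinct w \<and> set w = U \<and> (\<exists>u. hit u \<and> w = v # u @ [x])"

lemma bracketedE:
  assumes "bracketed U v x w"
  obtains u where "w = v # u @ [x]" "hit u" "distinct w" "set w = U"
  using assms unfolding bracketed_def by blast

lemma bracketedI:
  assumes "w \<approx> v # u @ [x]" "hit u" "distinct w" "set w = U"
  shows "bracketed U v x (v # u @ [x])"
  using rot_equiv_set[OF assms(1)] rot_equiv_distinct[OF assms(1)] assms(2-4)
  unfolding bracketed_def by auto

context
  fixes U :: "nat set"
  assumes finite_U: "finite U" and card_U: "card U = Suc (Suc c)"
begin

lemma bracketed_move_first: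
  assumes "bracketed U v x w" "v' \<in> U" "v' \<noteq> x"
    "even (rank (U - {x}) v') = even (rank (U - {x}) v)"
  shows "\<exists>w'. bracketed U v' x w' \<and> w \<approx> w'"
proof -
  obtain u where u: "w = v # u @ [x]" "hit u" "distinct w" "set w = U"
    using assms(1) by (rule bracketedE)
  have T: "finite (U - {x})" "card (U - {x}) = Suc c" using finite_U card_U u by auto
  have "framed (U - {x}) True v (v # u)" using u by (auto simp: framed_def)
  then obtain w1 where w1: "framed (U - {x}) True v' w1" "v # u \<approx> w1"
    using framed_move[OF T, of True v "v # u" v'] assms(2-4) by auto
  then obtain u1 where u1: "w1 = v' # u1" "hit u1" by (auto simp: framed_def)
  have "w \<approx> v' # u1 @ [x]" using rot_equiv_snoc[OF w1(2), of x] u(1) u1(1) by simp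
  then show ?thesis using bracketedI u u1(2) by blast
qed

lemma bracketed_move_last:
  assumes "bracketed U v x w" "x' \<in> U" "x' \<noteq> v"
    "even (rank (U - {v}) x') = even (rank (U - {v}) x)"
  shows "\<exists>w'. bracketed U v x' w' \<and> w \<approx> w'"
proof -
  obtain u where u: "w = v # u @ [x]" "hit u" "distinct w" "set w = U"
    using assms(1) by (rule bracketedE)
  have T: "finite (U - {v})" "card (U - {v}) = Suc c" using finite_U card_U u by auto
  have "framed (U - {v}) False x (u @ [x])" using u by (auto simp: framed_def)
  then obtain w1 where w1: "framed (U - {v}) False x' w1" "u @ [x] \<approx> w1"
    using framed_move[OF T, of False x "u @ [x]" x'] assms(2-4) by auto
  then obtain u1 where u1: "w1 = u1 @ [x']" "hit u1" by (auto simp: framed_def)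
  have "w \<approx> v # u1 @ [x']" using rot_equiv_Cons[OF w1(2), of v] u(1) u1(1) by simp
  then show ?thesis using bracketedI u u1(2) by blast
qed

lemma bracketed_swap:
  assumes "c = 2" "bracketed U v x w"
  shows "\<exists>h w'. h \<in> U \<and> h \<noteq> v \<and> h \<noteq> x \<and> bracketed U h x w' \<and> w \<approx> w'"
proof -
  obtain u where u: "w = v # u @ [x]" "hit u" "distinct w" "set w = U"
    using assms(2) by (rule bracketedE)
  obtain h1 h2 where h: "u = [h1, h2]"
    using hit_length[OF u(2)] assms(1) by (auto simp: length_Suc_conv numeral_2_eq_2)
  have "v \<noteq> h1" "v \<noteq> h2" using u(1,3) h by auto
  have "[] @ [v, h1] @ [h2, x] \<approx> [] @ rotate 1 [v, h1] @ [h2, x]"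
    by (rule rot_equiv_append[OF rot_equiv_rotate[OF hit_pair[OF assms(1) \<open>v \<noteq> h1\<close>]]])
  then have "w \<approx> h1 # [v, h2] @ [x]" using u(1) h by simp
  moreover have "hit [v, h2]" using hit_pair[OF assms(1) \<open>v \<noteq> h2\<close>] .
  ultimately have "bracketed U h1 x (h1 # [v, h2] @ [x])" using bracketedI u(3,4) by blast
  moreover have "h1 \<in> U" "h1 \<noteq> v" "h1 \<noteq> x" using u(1,3,4) h by auto
  ultimately show ?thesis using \<open>w \<approx> h1 # [v, h2] @ [x]\<close> by blast
qed

lemma bracketed_of_non_avoider:
  assumes "distinct w" "set w = U" "non_avoider m w"
  shows "\<exists>v x w'. bracketed U v x w' \<and> w \<approx> w'"
proof -
  obtain a u b where w: "w = a @ u @ b" "hit u" using assms(3) non_avoider_iff by blast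
  have "length w = Suc (Suc c)" using assms(1,2) card_U distinct_card by metis
  then have "length a + length b = 2" using w hit_length by simp
  then consider v x where "a = [v]" "b = [x]" | y x where "a = []" "b = [y, x]"
    | v y where "a = [v, y]" "b = []"
    by (cases a; cases b) (auto simp: length_Suc_conv numeral_2_eq_2)
  then show ?thesis
  proof cases
    case (1 v x)
    then have "bracketed U v x w" using assms(1,2) w by (auto simp: bracketed_def)
    then show ?thesis using rot_equiv_refl by blast
  next
    case (2 y x)
    have T: "finite (U - {x})" "card (U - {x}) = Suc c" using finite_U card_U assms(1,2) w 2 by auto
    have "framed (U - {x}) False y (u @ [y])" using assms(1,2) w 2 by (auto simp: framed_def)
    then obtain z w1 where "framed (U - {x}) True z w1" "u @ [y] \<approx> w1"
      using framed_to_low_rank[OF T] by blast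
    moreover from this obtain u1 where "w1 = z # u1" "hit u1" by (auto simp: framed_def)
    ultimately have "w \<approx> z # u1 @ [x]" using rot_equiv_snoc[of "u @ [y]" w1 x] w 2 by simp
    then show ?thesis using bracketedI \<open>hit u1\<close> assms(1,2) by blast
  next
    case (3 v y)
    have T: "finite (U - {v})" "card (U - {v}) = Suc c" using finite_U card_U assms(1,2) w 3 by auto
    have "framed (U - {v}) True y (y # u)" using assms(1,2) w 3 by (auto simp: framed_def)
    then obtain z w1 where "framed (U - {v}) False z w1" "y # u \<approx> w1"
      using framed_to_low_rank[OF T] by blast
    moreover from this obtain u1 where "w1 = u1 @ [z]" "hit u1" by (auto simp: framed_def)
    ultimately have "w \<approx> v # u1 @ [z]" using rot_equiv_Cons[of "y # u" w1 v] w 3 by simp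
    then show ?thesis using bracketedI \<open>hit u1\<close> assms(1,2) by blast
  qed
qed

lemma bracketed_normal_form:
  assumes "bracketed U v x w" "rank U x = Suc c"
  shows "normal_form U (rank U v) w"
proof -
  obtain u where u: "w = v # u @ [x]" "hit u" "distinct w" "set w = U"
    using assms(1) by (rule bracketedE)
  have "\<forall>y\<in>set u. y < x"
    using Suc_rank_eq_card_imp_less[OF finite_U _ _ _] u assms(2) card_U by auto
  then show ?thesis using u unfolding normal_form_def by fastforce
qed

end

definition bracketed_reachable :: "nat list \<Rightarrow> nat \<Rightarrow> nat \<Rightarrow> bool" where
  "bracketed_reachable w i j \<longleftrightarrow> (\<exists>v x w'. v \<in> set w \<and> x \<in> set w \<and>
     rank (set w) v = i \<and> rank (set w) x = j \<and> bracketed (set w) v x w' \<and> w \<approx> w')"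

context
  fixes w :: "nat list"
  assumes distinct_w: "distinct w" and length_w: "length w = Suc (Suc c)"
begin

lemma finite_card_set_w: "finite (set w)" "card (set w) = Suc (Suc c)"
  using distinct_w length_w by (simp_all add: distinct_card)

lemma bracketed_reachable_move_first:
  assumes "bracketed_reachable w i j" "i' \<le> Suc c" "i' \<noteq> j"
    "even (rank_without j i') = even (rank_without j i)"
  shows "bracketed_reachable w i' j"
proof -
  obtain v x w' where h: "v \<in> set w" "x \<in> set w" "rank (set w) v = i" "rank (set w) x = j"
    "bracketed (set w) v x w'" "w \<approx> w'"
    using assms(1) unfolding bracketed_reachable_def by blast
  obtain v' where v': "v' \<in> set w" "rank (set w) v' = i'"
    using rank_surj[OF finite_card_set_w(1), of i'] assms(2) finite_card_set_w(2) by auto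
  have "v' \<noteq> x" using h(4) v'(2) assms(3) by auto
  have "even (rank (set w - {x}) v') = even (rank (set w - {x}) v)"
    using assms(4) rank_Diff_singleton_eq_rank_without[OF finite_card_set_w(1) h(2)] h(1,3,4) v' by simp
  then obtain w'' where "bracketed (set w) v' x w''" "w' \<approx> w''"
    using bracketed_move_first[OF finite_card_set_w h(5) v'(1) \<open>v' \<noteq> x\<close>] by blast
  then show ?thesis unfolding bracketed_reachable_def using h v' rot_equiv_trans by blast
qed

lemma bracketed_reachable_move_last:
  assumes "bracketed_reachable w i j" "j' \<le> Suc c" "j' \<noteq> i"
    "even (rank_without i j') = even (rank_without i j)"
  shows "bracketed_reachable w i j'"
proof -
  obtain v x w' where h: "v \<in> set w" "x \<in> set w" "rank (set w) v = i" "rank (set w) x = j"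
    "bracketed (set w) v x w'" "w \<approx> w'"
    using assms(1) unfolding bracketed_reachable_def by blast
  obtain x' where x': "x' \<in> set w" "rank (set w) x' = j'"
    using rank_surj[OF finite_card_set_w(1), of j'] assms(2) finite_card_set_w(2) by auto
  have "x' \<noteq> v" using h(3) x'(2) assms(3) by auto
  have "even (rank (set w - {v}) x') = even (rank (set w - {v}) x)"
    using assms(4) rank_Diff_singleton_eq_rank_without[OF finite_card_set_w(1) h(1)] h(2,3,4) x' by simp
  then obtain w'' where "bracketed (set w) v x' w''" "w' \<approx> w''"
    using bracketed_move_last[OF finite_card_set_w h(5) x'(1) \<open>x' \<noteq> v\<close>] by blast
  then show ?thesis unfolding bracketed_reachable_def using h x' rot_equiv_trans by blast
qed

lemma bracketed_reachable_swap:
  assumes "c = 2" "bracketed_reachable w i j"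
  shows "\<exists>h \<le> Suc c. h \<noteq> i \<and> h \<noteq> j \<and> bracketed_reachable w h j"
proof -
  obtain v x w' where h: "v \<in> set w" "x \<in> set w" "rank (set w) v = i" "rank (set w) x = j"
    "bracketed (set w) v x w'" "w \<approx> w'"
    using assms(2) unfolding bracketed_reachable_def by blast
  obtain y w'' where y: "y \<in> set w" "y \<noteq> v" "y \<noteq> x" "bracketed (set w) y x w''" "w' \<approx> w''"
    using bracketed_swap[OF finite_card_set_w assms(1) h(5)] by blast
  have "rank (set w) y \<noteq> i" using rank_inj[OF finite_card_set_w(1) y(1) h(1)] y(2) h(3) by auto
  moreover have "rank (set w) y \<noteq> j" using rank_inj[OF finite_card_set_w(1) y(1) h(2)] y(3) h(4) by auto
  moreover have "bracketed_reachable w (rank (set w) y) j"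
    unfolding bracketed_reachable_def using y h rot_equiv_trans by blast
  moreover have "rank (set w) y \<le> Suc c" using rank_less_card[OF finite_card_set_w(1) y(1)] finite_card_set_w(2) by simp
  ultimately show ?thesis by blast
qed

lemma normalizable_length_Suc_Suc_c:
  assumes "non_avoider m w"
  shows "normalizable w"
proof -
  obtain v x w' where h: "bracketed (set w) v x w'" "w \<approx> w'"
    using bracketed_of_non_avoider[OF finite_card_set_w distinct_w refl assms] by blast
  obtain u where "w' = v # u @ [x]" "hit u" "distinct w'" "set w' = set w"
    using h(1) by (rule bracketedE)
  then have v: "v \<in> set w" "x \<in> set w" "v \<noteq> x" by auto
  have start: "bracketed_reachable w (rank (set w) v) (rank (set w) x)"
    unfolding bracketed_reachable_def using h v by blast
  have bounds: "rank (set w) v \<le> Suc c" "rank (set w) x \<le> Suc c"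
    using rank_less_card[OF finite_card_set_w(1)] v(1,2) finite_card_set_w(2) by (simp_all add: less_Suc_eq_le)
  have ne: "rank (set w) v \<noteq> rank (set w) x" using rank_inj[OF finite_card_set_w(1) v(1,2)] v(3) by auto
  have "\<exists>t \<le> 1. bracketed_reachable w t (Suc c)"
  proof (rule game_reaches_top)
    show "2 \<le> c" using one_less_c by simp
    show "bracketed_reachable w i' j"
      if "bracketed_reachable w i j" "i' \<le> Suc c" "i' \<noteq> j"
        "even (rank_without j i') = even (rank_without j i)" for i j i'
      using bracketed_reachable_move_first that .
    show "bracketed_reachable w i j'"
      if "bracketed_reachable w i j" "j' \<le> Suc c" "j' \<noteq> i"
        "even (rank_without i j') = even (rank_without i j)" for i j j'
      using bracketed_reachable_move_last that .
    show "\<exists>h \<le> Suc c. h \<noteq> i \<and> h \<noteq> j \<and> bracketed_reachable w h j"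
      if "c = 2" "bracketed_reachable w i j" for i j
      using bracketed_reachable_swap that .
  qed (fact start bounds ne)+
  then obtain t where "t \<le> 1" "bracketed_reachable w t (Suc c)" by blast
  then obtain v x w' where top: "rank (set w) v = t" "rank (set w) x = Suc c"
    "bracketed (set w) v x w'" "w \<approx> w'"
    unfolding bracketed_reachable_def by blast
  have "normal_form (set w) t w'" using bracketed_normal_form[OF finite_card_set_w top(3,2)] top(1) by simp
  then show ?thesis using \<open>t \<le> 1\<close> top(4) unfolding normalizable_def by blast
qed

end

lemma non_avoider_slide_to_end:
  assumes "distinct w" "Suc c \<le> length w" "non_avoider m w"
  shows "\<exists>v z. w \<approx> v @ [z] \<and> non_avoider m v"
proof -
  obtain a u b where w: "w = a @ u @ b" "hit u" using assms(3) non_avoider_iff by blast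
  show ?thesis
  proof (cases b rule: rev_cases)
    case (snoc b' z)
    then have "w = (a @ u @ b') @ [z]" using w(1) by simp
    moreover have "non_avoider m (a @ u @ b')" using non_avoiderI[OF w(2)] .
    ultimately show ?thesis using rot_equiv_refl by blast
  next
    case Nil
    then have "a \<noteq> []" using assms(2) w hit_length by auto
    then obtain a' x where a: "a = a' @ [x]" by (cases a rule: rev_cases) auto
    have T: "finite (set (x # u))" "card (set (x # u)) = Suc c"
      using assms(1) w a hit_length by (auto simp: distinct_card)
    have "framed (set (x # u)) True x (x # u)" using assms(1) w a by (auto simp: framed_def)
    then obtain z w1 where "framed (set (x # u)) False z w1" "x # u \<approx> w1"
      using framed_to_low_rank[OF T] by blast
    moreover from this obtain u1 where u1: "w1 = u1 @ [z]" "hit u1" by (auto simp: framed_def)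
    ultimately have "w \<approx> (a' @ u1) @ [z]"
      using rot_equiv_append[of "x # u" w1 a' "[]"] w a Nil by simp
    moreover have "non_avoider m (a' @ u1)" using non_avoiderI[OF u1(2), of a' "[]"] by simp
    ultimately show ?thesis by blast
  qed
qed

lemma largest_to_end:
  assumes "distinct w" "Suc (Suc c) < length w" "non_avoider m w"
    and IH: "\<And>v. distinct v \<Longrightarrow> length v = length w - 1 \<Longrightarrow> non_avoider m v \<Longrightarrow> normalizable v"
  shows "\<exists>v M. w \<approx> v @ [M] \<and> non_avoider m v \<and> (\<forall>y\<in>set v. y < M)"
proof -
  have len: "length v = length w \<and> distinct v" if "w \<approx> v" for v
    using rot_equiv_length[OF that] rot_equiv_distinct[OF that] assms(1) by simp
  obtain w1 z where w1: "w \<approx> w1 @ [z]" "non_avoider m w1"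
    using non_avoider_slide_to_end assms(1-3) by fastforce
  have "distinct w1" "length w1 = length w - 1" using len[OF w1(1)] by auto
  then obtain k K where K: "k \<le> 1" "normal_form (set w1) k K" "w1 \<approx> K"
    using IH w1(2) unfolding normalizable_def by blast
  obtain l u r where Kf: "K = l # u @ r" "hit u" "rank (set w1) l = k" "distinct K" "set K = set w1"
    using K(2) by (rule normal_formE)
  have w2: "w \<approx> l # u @ r @ [z]"
    using rot_equiv_trans[OF w1(1) rot_equiv_snoc[OF K(3)]] Kf(1) by simp
  have "distinct (u @ r @ [z])" "length (u @ r @ [z]) = length w - 1" using len[OF w2] by auto
  moreover have "non_avoider m (u @ r @ [z])" using non_avoiderI[OF Kf(2), of "[]"] by simp
  ultimately obtain k2 K2 where K2: "k2 \<le> 1" "normal_form (set (u @ r @ [z])) k2 K2" "u @ r @ [z] \<approx> K2"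
    using IH unfolding normalizable_def by blast
  have w3: "w \<approx> l # K2" using rot_equiv_trans[OF w2 rot_equiv_Cons[OF K2(3)]] .
  have "Suc c < length K2" using len[OF w3] assms(2) by simp
  then obtain pre M where pm: "K2 = pre @ [M]" "non_avoider m pre" "\<forall>y\<in>set pre. y < M"
    using normal_form_snocE[OF K2(2)] K2(1) one_less_c by auto
  have "rank (set w1) l < card (set u)" using Kf K(1) hit_length one_less_c by (simp add: distinct_card)
  then obtain y where "y \<in> set u" "l \<le> y"
    using exists_ge_of_rank_less_card[of "set w1" "set u" l] Kf by auto
  moreover have "set u \<subseteq> insert M (set pre)" using K2(2) pm(1) by (auto simp: normal_form_def)
  moreover have "l \<noteq> M" using len[OF w3] pm(1) by auto
  ultimately have "l < M" using pm(3) by fastforce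
  then have "\<forall>y\<in>set (l # pre). y < M" using pm(3) by simp
  moreover have "non_avoider m (l # pre)" using non_avoider_append[OF pm(2), of "[l]" "[]"] by simp
  moreover have "w \<approx> (l # pre) @ [M]" using w3 pm(1) by simp
  ultimately show ?thesis by blast
qed

lemma normalizable_step:
  assumes "distinct w" "Suc (Suc c) < length w" "non_avoider m w"
    and IH: "\<And>v. distinct v \<Longrightarrow> length v = length w - 1 \<Longrightarrow> non_avoider m v \<Longrightarrow> normalizable v"
  shows "normalizable w"
proof -
  obtain v M where v: "w \<approx> v @ [M]" "non_avoider m v" "\<forall>y\<in>set v. y < M"
    using largest_to_end[OF assms] by blast
  have "distinct v" "length v = length w - 1" "insert M (set v) = set w"
    using rot_equiv_length[OF v(1)] rot_equiv_distinct[OF v(1)] rot_equiv_set[OF v(1)] assms(1) by auto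
  then obtain k K where K: "k \<le> 1" "normal_form (set v) k K" "v \<approx> K"
    using IH v(2) unfolding normalizable_def by blast
  have "normal_form (set w) k (K @ [M])"
    using normal_form_snoc[OF K(2) v(3)] \<open>insert M (set v) = set w\<close> by simp
  moreover have "w \<approx> K @ [M]" using rot_equiv_trans[OF v(1) rot_equiv_snoc[OF K(3)]] .
  ultimately show ?thesis using K(1) unfolding normalizable_def by blast
qed

lemma normalizable:
  assumes "distinct w" "c < length w" "non_avoider m w"
  shows "normalizable w"
  using assms
proof (induction "length w" arbitrary: w rule: less_induct)
  case less
  consider "length w = Suc c" | "length w = Suc (Suc c)" | "Suc (Suc c) < length w"
    using less.prems(2) by linarith
  then show ?case
  proof cases
    case 1
    then show ?thesis using normalizable_length_Suc_c less.prems by blast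
  next
    case 2
    then show ?thesis using normalizable_length_Suc_Suc_c less.prems by blast
  next
    case 3
    then show ?thesis
      using less.hyps by (intro normalizable_step[OF less.prems(1) 3 less.prems(3)]) auto
  qed
qed

theorem non_avoider_K_equiv:
  assumes "c < n" "\<phi> \<in> perms n" "non_avoider m \<phi>"
  shows "K_equiv m n \<phi> (p_perm m n) \<or> K_equiv m n \<phi> (q_perm m n)"
proof -
  have \<phi>: "distinct \<phi>" "set \<phi> = {1..n}" using assms(2) by (simp_all add: perms_def)
  then have "length \<phi> = n" using distinct_card by fastforce
  then obtain k \<psi> where \<psi>: "k \<le> 1" "normal_form {1..n} k \<psi>" "\<phi> \<approx> \<psi>"
    using normalizable[OF \<phi>(1) _ assms(3)] assms(1) \<phi>(2) unfolding normalizable_def by auto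
  then have "\<psi> \<approx> p_perm m n \<or> \<psi> \<approx> q_perm m n"
    using normal_form_unique[OF _ p_perm_normal_form[OF assms(1)]]
      normal_form_unique[OF _ q_perm_normal_form[OF assms(1)]] by (cases k) auto
  then have "\<phi> \<approx> p_perm m n \<or> \<phi> \<approx> q_perm m n" using \<psi>(3) rot_equiv_trans by blast
  then show ?thesis using rot_equiv_K_equiv[OF assms(2)] by blast
qed

end

theorem theorem2p7:
  fixes m :: "nat list" and c n :: nat
  assumes "c > 1" and "m \<in> perms c" and "n > c"
  shows "\<forall>\<phi> \<in> perms n. non_avoider m \<phi> \<longrightarrow>
           K_equiv m n \<phi> (p_perm m n) \<or> K_equiv m n \<phi> (q_perm m n)"
proof -
  interpret cyclic_pattern m c using assms(1,2) by unfold_locales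
  show ?thesis using non_avoider_K_equiv assms(3) by blast
qed

end
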